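(* Write \[ \frac{J_5^2 J_{10}^5 J_{4,10}^2}{J_{2,10}^4 J_{3,10}^3} = 1 + \sum_{n\ge 1} b(n) q^n . \] Then $b(n) \ge \lfloor n/6 \rfloor$ for all $n \ge 1$.
   Context: Notation: $(a;q)_\infty = \prod_{i\ge 0}(1-aq^i)$ and $(a_1,\dots,a_k;q)_\infty = (a_1;q)_\infty\cdots(a_k;q)_\infty$. For positive integers $a<b$: $J_b = (q^b;q^b)_\infty$ and $J_{a,b} = (q^a, q^{b-a}, q^b; q^b)_\infty$. *)

theory Defs
  imports Complex_Main "HOL-Computational_Algebra.Formal_Power_Series"
begin

definition qpoch_inf :: "nat \<Rightarrow> nat \<Rightarrow> rat fps" where
  "qpoch_inf a m = lim (\<lambda>N. \<Prod>i<N. (1 - fps_X ^ (a + i * m)))"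

definition J :: "nat \<Rightarrow> rat fps" where
  "J b = qpoch_inf b b"

definition J2 :: "nat \<Rightarrow> nat \<Rightarrow> rat fps" where
  "J2 a b = qpoch_inf a b * qpoch_inf (b - a) b * qpoch_inf b b"

definition F3 :: "rat fps" where
  "F3 = (J 5 ^ 2 * J 10 ^ 5 * J2 4 10 ^ 2) / (J2 2 10 ^ 4 * J2 3 10 ^ 3)"

end

theory Submission
  imports Defs
begin

unbundle fps_syntax

text \<open>Splitting $(q^4;q^{10})_\infty = (q^2,q^7;q^{10})_\infty (-q^2;q^5)_\infty$ and
  $(q^6;q^{10})_\infty = (q^3,q^8;q^{10})_\infty (-q^3;q^5)_\infty$, and taking the factors $1-q^2$, $1-q^3$ out
  of $(q^2;q^{10})_\infty$, $(q^3;q^{10})_\infty$, the quotient becomes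
  \[ \frac{1}{(1-q^2)(1-q^3)} \cdot \frac{Q^2}{(q^2,q^7,q^8,q^8,q^{12},q^{13};q^{10})_\infty},
     \qquad Q = (q^5;q^5)_\infty(-q^2;q^5)_\infty(-q^3;q^5)_\infty. \]
  Reciprocals of products $(q^a;q^m)_\infty$ have nonnegative coefficients, and so does $Q$, which by the
  Jacobi triple product is $\sum_j q^{j(5j-1)/2}$. The latter is derived from the finite identity
  \[ \prod_{k<N}(1+q^{dk+a})(1+q^{dk+b}) = \sum_j \binom{2N}{N+j}_{q^d} q^{d j(j-1)/2 + aj} \qquad (a+b=d), \]
  because after multiplication by $(q^d;q^d)_{2N}$ each Gaussian coefficient $\binom{2N}{k}_{q^d}$ agrees
  with $1$ in all degrees below $\min(k, 2N-k)$. So all factors but the first have nonnegative coefficients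
  and constant term $1$, and $b(n)$ is at least the number of solutions of $2x + 3y = n$, which is at least
  $\lfloor n/6 \rfloor$.\<close>

section \<open>Agreement of power series up to a degree\<close>

definition fps_agree :: "nat \<Rightarrow> 'a fps \<Rightarrow> 'a fps \<Rightarrow> bool" where
  "fps_agree n f g \<longleftrightarrow> (\<forall>j\<le>n. f $ j = g $ j)"

lemma fps_agree_refl [simp]: "fps_agree n f f"
  by (simp add: fps_agree_def)

lemma fps_agree_sym: "fps_agree n f g \<Longrightarrow> fps_agree n g f"
  by (simp add: fps_agree_def)

lemma fps_agree_trans [trans]: "fps_agree n f g \<Longrightarrow> fps_agree n g h \<Longrightarrow> fps_agree n f h"
  by (simp add: fps_agree_def)

lemma fps_agree_iff_dist: "fps_agree n f g \<longleftrightarrow> dist f g < inverse (2 ^ n)"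
  by (simp add: fps_agree_def dist_less_eq_nth_equal)

lemma fps_eqI_agree: "(\<And>n. fps_agree n f g) \<Longrightarrow> f = g"
  by (auto simp: fps_agree_def fps_eq_iff)

lemma fps_agree_mult:
  fixes f g f' g' :: "'a::semiring_0 fps"
  assumes "fps_agree n f g" "fps_agree n f' g'"
  shows "fps_agree n (f * f') (g * g')"
  using assms by (auto simp: fps_agree_def fps_mult_nth intro!: sum.cong)

lemma fps_agree_prod:
  fixes F G :: "'b \<Rightarrow> 'a::comm_semiring_1 fps"
  assumes "\<And>x. x \<in> A \<Longrightarrow> fps_agree n (F x) (G x)"
  shows "fps_agree n (\<Prod>x\<in>A. F x) (\<Prod>x\<in>A. G x)"
  using assms by (induction A rule: infinite_finite_induct) (auto intro: fps_agree_mult)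

lemma fps_agree_inverse:
  fixes f g :: "'a::field fps"
  assumes "fps_agree n f g" "f $ 0 \<noteq> 0"
  shows "fps_agree n (inverse f) (inverse g)"
proof -
  have "g $ 0 \<noteq> 0"
    using assms by (auto simp: fps_agree_def)
  then have "inverse f - inverse g = inverse f * inverse g * (g - f)"
    using assms(2) by (simp add: algebra_simps inverse_mult_eq_1 inverse_mult_eq_1' flip: mult.assoc)
  moreover have "fps_agree n (inverse f * inverse g * (g - f)) (inverse f * inverse g * 0)"
    using assms(1) by (intro fps_agree_mult) (auto simp: fps_agree_def)
  ultimately show ?thesis
    by (simp add: fps_agree_def) (metis eq_iff_diff_eq_0 fps_sub_nth)
qed

section \<open>Products of factors $1 + c q^e$\<close>

definition qfactor :: "'a::comm_ring_1 \<Rightarrow> nat \<Rightarrow> 'a fps" where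
  "qfactor c e = 1 + fps_const c * fps_X ^ e"

text \<open>The infinite product $\prod_{e \in S}(1 + c q^e)$ over the positive exponents in \<open>S\<close>:
  factors with $e > n$ do not affect the coefficient of $q^n$. An exponent $0$ in \<open>S\<close> is ignored.\<close>
definition qprod :: "'a::comm_ring_1 \<Rightarrow> nat set \<Rightarrow> 'a fps" where
  "qprod c S = Abs_fps (\<lambda>n. (\<Prod>e\<in>S \<inter> {1..n}. qfactor c e) $ n)"

lemma qfactor_minus_one: "qfactor (- 1) e = 1 - fps_X ^ e"
  unfolding qfactor_def fps_const_neg [symmetric] by simp

lemma qfactor_agree_one: "n < e \<Longrightarrow> fps_agree n (qfactor c e) 1"
  by (auto simp: fps_agree_def qfactor_def)

lemma prod_qfactor_agree_truncation:
  assumes "finite T"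
  shows "fps_agree n (\<Prod>e\<in>T. qfactor c e) (\<Prod>e\<in>T \<inter> {..n}. qfactor c e)"
proof -
  have "fps_agree n (\<Prod>e\<in>T - {..n}. qfactor c e) (\<Prod>e\<in>T - {..n}. 1)"
    by (intro fps_agree_prod qfactor_agree_one) auto
  then have "fps_agree n ((\<Prod>e\<in>T \<inter> {..n}. qfactor c e) * (\<Prod>e\<in>T - {..n}. qfactor c e))
                         ((\<Prod>e\<in>T \<inter> {..n}. qfactor c e) * 1)"
    by (intro fps_agree_mult) simp_all
  then show ?thesis
    using assms by (simp add: prod.Int_Diff [symmetric])
qed

lemma prod_qfactor_agree_qprod:
  assumes "finite T" "0 \<notin> T" "T \<inter> {..n} = S \<inter> {1..n}"
  shows "fps_agree n (\<Prod>e\<in>T. qfactor c e) (qprod c S)"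
  unfolding fps_agree_def
proof safe
  fix j assume "j \<le> n"
  then have "T \<inter> {..j} = (T \<inter> {..n}) \<inter> {..j}" "S \<inter> {1..j} = (S \<inter> {1..n}) \<inter> {..j}"
    by auto
  then have "T \<inter> {..j} = S \<inter> {1..j}"
    using assms(3) by simp
  then have "(\<Prod>e\<in>T. qfactor c e) $ j = (\<Prod>e\<in>S \<inter> {1..j}. qfactor c e) $ j"
    using prod_qfactor_agree_truncation[OF assms(1), of j c] by (simp add: fps_agree_def)
  then show "(\<Prod>e\<in>T. qfactor c e) $ j = qprod c S $ j"
    by (simp add: qprod_def)
qed

lemma qprod_agree: "fps_agree n (qprod c S) (\<Prod>e\<in>S \<inter> {1..n}. qfactor c e)"
  by (rule fps_agree_sym, rule prod_qfactor_agree_qprod) auto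

lemma qprod_nth_0 [simp]: "qprod c S $ 0 = 1"
  by (simp add: qprod_def)

lemma qprod_Un:
  assumes "S \<inter> S' = {}"
  shows "qprod c (S \<union> S') = qprod c S * qprod c S'"
proof (rule fps_eqI_agree)
  fix n
  have "fps_agree n (qprod c (S \<union> S')) (\<Prod>e\<in>(S \<union> S') \<inter> {1..n}. qfactor c e)"
    by (rule qprod_agree)
  also have "(S \<union> S') \<inter> {1..n} = (S \<inter> {1..n}) \<union> (S' \<inter> {1..n})"
    by blast
  also have "(\<Prod>e\<in>\<dots>. qfactor c e) = (\<Prod>e\<in>S \<inter> {1..n}. qfactor c e) * (\<Prod>e\<in>S' \<inter> {1..n}. qfactor c e)"
    using assms by (intro prod.union_disjoint) auto
  also have "fps_agree n \<dots> (qprod c S * qprod c S')"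
    by (intro fps_agree_mult fps_agree_sym[OF qprod_agree])
  finally show "fps_agree n (qprod c (S \<union> S')) (qprod c S * qprod c S')" .
qed

lemma qprod_singleton:
  assumes "0 < e"
  shows "qprod c {e} = qfactor c e"
proof (rule fps_eqI_agree)
  fix n
  have "fps_agree n (\<Prod>x\<in>{e}. qfactor c x) (qprod c {e})"
    by (rule prod_qfactor_agree_qprod) (use assms in auto)
  then show "fps_agree n (qprod c {e}) (qfactor c e)"
    by (simp add: fps_agree_sym)
qed

lemma qfactor_mult_qfactor_minus: "qfactor c e * qfactor (- c) e = qfactor (- c\<^sup>2) (2 * e)"
  unfolding qfactor_def fps_const_neg [symmetric] fps_const_power [symmetric]
  by (simp add: algebra_simps power2_eq_square power_mult del: fps_const_neg fps_const_mult)

lemma qprod_double: "qprod (- c\<^sup>2) ((*) 2 ` S) = qprod c S * qprod (- c) S"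
proof (rule fps_eqI_agree)
  fix n
  let ?S = "S \<inter> {1..n}"
  have "fps_agree n (qprod (- c\<^sup>2) ((*) 2 ` S)) (\<Prod>e\<in>(*) 2 ` ?S. qfactor (- c\<^sup>2) e)"
  proof (rule fps_agree_sym, rule prod_qfactor_agree_qprod)
    show "(*) 2 ` ?S \<inter> {..n} = (*) 2 ` S \<inter> {1..n}"
      by (auto simp: image_iff)
  qed auto
  also have "(\<Prod>e\<in>(*) 2 ` ?S. qfactor (- c\<^sup>2) e) = (\<Prod>e\<in>?S. qfactor c e * qfactor (- c) e)"
    by (subst prod.reindex) (auto simp: inj_on_def qfactor_mult_qfactor_minus)
  also have "\<dots> = (\<Prod>e\<in>?S. qfactor c e) * (\<Prod>e\<in>?S. qfactor (- c) e)"
    by (rule prod.distrib)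
  also have "fps_agree n \<dots> (qprod c S * qprod (- c) S)"
    by (intro fps_agree_mult fps_agree_sym[OF qprod_agree])
  finally show "fps_agree n (qprod (- c\<^sup>2) ((*) 2 ` S)) (qprod c S * qprod (- c) S)" .
qed

section \<open>Arithmetic progressions and $q$-Pochhammer symbols\<close>

definition progression :: "nat \<Rightarrow> nat \<Rightarrow> nat set" where
  "progression a m = range (\<lambda>i. a + i * m)"

lemma progression_double: "progression (2 * a) (2 * m) = (*) 2 ` progression a m"
  by (auto simp: progression_def image_image algebra_simps)

lemma progression_split_parity:
  assumes "0 < m"
  shows "progression a m = progression a (2 * m) \<union> progression (a + m) (2 * m)"
    and "progression a (2 * m) \<inter> progression (a + m) (2 * m) = {}"
proof -
  have "a + i * m \<in> progression a (2 * m) \<union> progression (a + m) (2 * m)" for i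
  proof (cases "even i")
    case True
    then obtain k where "i = 2 * k"
      by blast
    then have "a + i * m = a + k * (2 * m)"
      by simp
    then show ?thesis
      by (auto simp: progression_def)
  next
    case False
    then obtain k where "i = 2 * k + 1"
      by (blast elim: oddE)
    then have "a + i * m = (a + m) + k * (2 * m)"
      by (simp add: algebra_simps)
    then show ?thesis
      by (auto simp: progression_def)
  qed
  moreover have "a + (2 * k) * m \<in> progression a m" "a + (2 * k + 1) * m \<in> progression a m" for k
    unfolding progression_def by (rule range_eqI, rule refl)+
  ultimately show "progression a m = progression a (2 * m) \<union> progression (a + m) (2 * m)"
    by (auto simp: progression_def algebra_simps)
  have "a + i * (2 * m) \<noteq> (a + m) + j * (2 * m)" for i j
  proof
    assume "a + i * (2 * m) = (a + m) + j * (2 * m)"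
    then have "m * (2 * i) = m * (2 * j + 1)"
      by (simp add: algebra_simps)
    then have "2 * i = 2 * j + 1"
      using assms by (metis mult_left_cancel not_gr0)
    then show False
      by presburger
  qed
  then show "progression a (2 * m) \<inter> progression (a + m) (2 * m) = {}"
    by (auto simp: progression_def)
qed

lemma progression_eq_insert:
  assumes "0 < m"
  shows "progression a m = insert a (progression (a + m) m)" and "a \<notin> progression (a + m) m"
proof -
  have "a + i * m \<in> insert a (progression (a + m) m)" for i
    by (cases i) (auto simp: progression_def)
  moreover have "a + m + k * m \<in> progression a m" for k
    using rangeI[of "\<lambda>i. a + i * m" "Suc k"] by (simp add: progression_def add.assoc)
  moreover have "a \<in> progression a m"
    unfolding progression_def by (rule range_eqI[of _ _ 0]) simp
  ultimately show "progression a m = insert a (progression (a + m) m)"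
    unfolding progression_def by blast
  show "a \<notin> progression (a + m) m"
    using assms by (auto simp: progression_def)
qed

lemma prod_qfactor_agree_qprod_progression:
  assumes "0 < a" "0 < m" "n < N"
  shows "fps_agree n (\<Prod>i<N. qfactor c (a + i * m)) (qprod c (progression a m))"
proof -
  have "(\<lambda>i. a + i * m) ` {..<N} \<inter> {..n} = progression a m \<inter> {1..n}"
  proof (intro equalityI subsetI)
    fix x assume "x \<in> progression a m \<inter> {1..n}"
    then obtain i where x: "x = a + i * m" "a + i * m \<le> n"
      by (auto simp: progression_def)
    moreover have "i \<le> i * m"
      using assms(2) by simp
    ultimately have "i < N"
      using assms(3) by linarith
    then show "x \<in> (\<lambda>i. a + i * m) ` {..<N} \<inter> {..n}"
      using x by auto
  qed (use assms(1) in \<open>auto simp: progression_def\<close>)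
  then have "fps_agree n (\<Prod>e\<in>(\<lambda>i. a + i * m) ` {..<N}. qfactor c e) (qprod c (progression a m))"
    using assms(1) by (intro prod_qfactor_agree_qprod) auto
  moreover have "inj_on (\<lambda>i. a + i * m) {..<N}"
    using assms(2) by (auto simp: inj_on_def)
  ultimately show ?thesis
    by (simp add: prod.reindex)
qed

lemma qpoch_inf_eq_qprod:
  assumes "0 < a" "0 < m"
  shows "qpoch_inf a m = qprod (- 1) (progression a m)"
proof -
  let ?p = "\<lambda>N. \<Prod>i<N. 1 - fps_X ^ (a + i * m)"
  have "?p \<longlonglongrightarrow> qprod (- 1) (progression a m)"
  proof (rule metric_LIMSEQ_I)
    fix r :: real
    assume "0 < r"
    then obtain n where n: "inverse (2 ^ n) < r"
      using real_arch_pow_inv[of r "1/2"] by (auto simp: power_one_over inverse_eq_divide)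
    show "\<exists>N0. \<forall>N\<ge>N0. dist (?p N) (qprod (- 1) (progression a m)) < r"
    proof (intro exI allI impI)
      fix N
      assume "Suc n \<le> N"
      then have "fps_agree n (?p N) (qprod (- 1) (progression a m))"
        using prod_qfactor_agree_qprod_progression[OF assms, of n N "- 1"]
        by (simp add: qfactor_minus_one)
      then show "dist (?p N) (qprod (- 1) (progression a m)) < r"
        unfolding fps_agree_iff_dist using n by (rule less_trans)
    qed
  qed
  then show ?thesis
    unfolding qpoch_inf_def by (rule limI)
qed

lemma qprod_progression_first:
  assumes "0 < a" "0 < m"
  shows "qprod c (progression a m) = qfactor c a * qprod c (progression (a + m) m)"
  using progression_eq_insert[OF assms(2), of a] qprod_Un[of "{a}" "progression (a + m) m" c]
    qprod_singleton[OF assms(1), of c] by simp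

lemma qprod_progression_double:
  assumes "0 < m"
  shows "qprod (- 1) (progression (2 * a) (2 * m)) =
    qprod (- 1) (progression a (2 * m)) * qprod (- 1) (progression (a + m) (2 * m)) * qprod 1 (progression a m)"
proof -
  have "qprod (- 1) (progression (2 * a) (2 * m)) = qprod (- 1) (progression a m) * qprod 1 (progression a m)"
    unfolding progression_double using qprod_double[of 1 "progression a m"] by (simp add: mult.commute)
  then show ?thesis
    using progression_split_parity[OF assms, of a] qprod_Un by metis
qed

section \<open>Power series with nonnegative coefficients\<close>

definition nonneg_coeffs :: "'a::{zero,ord} fps \<Rightarrow> bool" where
  "nonneg_coeffs f \<longleftrightarrow> (\<forall>n. 0 \<le> f $ n)"

lemma nonneg_coeffs_mult:
  fixes f g :: "'a::linordered_semiring fps"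
  shows "nonneg_coeffs f \<Longrightarrow> nonneg_coeffs g \<Longrightarrow> nonneg_coeffs (f * g)"
  by (auto simp: nonneg_coeffs_def fps_mult_nth intro!: sum_nonneg)

lemma nonneg_coeffs_prod:
  fixes f :: "'b \<Rightarrow> 'a::linordered_semidom fps"
  shows "(\<And>x. x \<in> A \<Longrightarrow> nonneg_coeffs (f x)) \<Longrightarrow> nonneg_coeffs (\<Prod>x\<in>A. f x)"
proof (induction A rule: infinite_finite_induct)
  case (insert x F)
  then show ?case
    by (simp add: nonneg_coeffs_mult)
qed (auto simp: nonneg_coeffs_def)

lemma nonneg_coeffs_power:
  fixes f :: "'a::linordered_semidom fps"
  shows "nonneg_coeffs f \<Longrightarrow> nonneg_coeffs (f ^ k)"
  by (induction k) (auto simp: nonneg_coeffs_mult, simp add: nonneg_coeffs_def)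

lemma fps_mult_nth_ge:
  fixes f g :: "'a::linordered_semidom fps"
  assumes "nonneg_coeffs f" "nonneg_coeffs g"
  shows "f $ n * g $ 0 \<le> (f * g) $ n"
proof -
  have "f $ n * g $ (n - n) \<le> (\<Sum>i=0..n. f $ i * g $ (n - i))"
    using member_le_sum[of n "{0..n}" "\<lambda>i. f $ i * g $ (n - i)"] assms
    by (simp add: nonneg_coeffs_def)
  then show ?thesis
    by (simp add: fps_mult_nth)
qed

lemma inverse_one_minus_fps_X_power:
  assumes "0 < e"
  shows "inverse (1 - fps_X ^ e :: 'a::field fps) = Abs_fps (\<lambda>n. if e dvd n then 1 else 0)"
proof (rule fps_inverse_unique, rule fps_ext)
  fix n
  have "((1 - fps_X ^ e) * Abs_fps (\<lambda>n. if e dvd n then 1 else 0 :: 'a)) $ n =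
        (if e dvd n then 1 else 0) - (if n < e then 0 else if e dvd n - e then 1 else 0)"
    by (simp add: algebra_simps fps_X_power_mult_nth)
  also have "\<dots> = (1 :: 'a fps) $ n"
    using assms by (cases "n < e") (auto dest: dvd_imp_le simp: dvd_minus_self)
  finally show "((1 - fps_X ^ e) * Abs_fps (\<lambda>n. if e dvd n then 1 else 0)) $ n = (1 :: 'a fps) $ n" .
qed

lemma nonneg_coeffs_inverse_one_minus_fps_X_power:
  "0 < e \<Longrightarrow> nonneg_coeffs (inverse (1 - fps_X ^ e :: 'a::linordered_field fps))"
  by (simp add: inverse_one_minus_fps_X_power nonneg_coeffs_def)

lemma nonneg_coeffs_inverse_qprod:
  fixes S :: "nat set"
  shows "nonneg_coeffs (inverse (qprod (- 1 :: 'a::linordered_field) S))"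
  unfolding nonneg_coeffs_def
proof
  fix n
  have "fps_agree n (inverse (qprod (- 1 :: 'a) S)) (inverse (\<Prod>e\<in>S \<inter> {1..n}. qfactor (- 1) e))"
    by (intro fps_agree_inverse qprod_agree) simp
  moreover have "nonneg_coeffs (inverse (\<Prod>e\<in>S \<inter> {1..n}. qfactor (- 1 :: 'a) e))"
    unfolding inverse_prod_fps qfactor_minus_one
    by (intro nonneg_coeffs_prod nonneg_coeffs_inverse_one_minus_fps_X_power) auto
  ultimately show "0 \<le> inverse (qprod (- 1 :: 'a) S) $ n"
    by (auto simp: fps_agree_def nonneg_coeffs_def)
qed

section \<open>Gaussian binomial coefficients\<close>

context
  fixes d :: nat
  assumes base_pos: "0 < d"
begin

text \<open>\<open>qpochhammer m\<close> is $(q^d;q^d)_m$ and \<open>qbinom m k\<close> the Gaussian binomial coefficient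
  $\binom{m}{k}$ in the base $q^d$.\<close>
definition qpochhammer :: "nat \<Rightarrow> 'a::field fps" where
  "qpochhammer m = (\<Prod>i<m. 1 - fps_X ^ (d * (i + 1)))"

definition qbinom :: "nat \<Rightarrow> nat \<Rightarrow> 'a::field fps" where
  "qbinom m k = (if k \<le> m then qpochhammer m * inverse (qpochhammer k * qpochhammer (m - k)) else 0)"

lemma qpochhammer_0 [simp]: "qpochhammer 0 = 1"
  by (simp add: qpochhammer_def)

lemma qpochhammer_Suc: "qpochhammer (Suc m) = qpochhammer m * (1 - fps_X ^ (d * (m + 1)))"
  by (simp add: qpochhammer_def)

lemma qpochhammer_nth_0 [simp]: "qpochhammer m $ 0 = 1"
  using base_pos by (induction m) (simp_all add: qpochhammer_Suc)

lemma qpochhammer_neq_0 [simp]: "qpochhammer m \<noteq> 0"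
  using qpochhammer_nth_0[of m] by (metis fps_zero_nth zero_neq_one)

lemma qbinom_mult_qpochhammer:
  "k \<le> m \<Longrightarrow> qbinom m k * (qpochhammer k * qpochhammer (m - k)) = qpochhammer m"
  by (simp add: qbinom_def inverse_mult_eq_1 mult.assoc)

lemma qbinom_0 [simp]: "qbinom m 0 = 1"
  by (simp add: qbinom_def inverse_mult_eq_1')

lemma qbinom_self [simp]: "qbinom m m = 1"
  by (simp add: qbinom_def inverse_mult_eq_1')

lemma qbinom_eq_0: "m < k \<Longrightarrow> qbinom m k = 0"
  by (simp add: qbinom_def)

lemma qbinom_mult_common_denominator:
  assumes "k < m"
  defines "D \<equiv> qpochhammer (Suc k) * qpochhammer (m - k) :: 'a::field fps"
  shows "qbinom m k * D = qpochhammer m * (1 - fps_X ^ (d * (k + 1)))"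
    and "qbinom m (Suc k) * D = qpochhammer m * (1 - fps_X ^ (d * (m - k)))"
    and "qbinom (Suc m) (Suc k) * D = qpochhammer m * (1 - fps_X ^ (d * (k + 1)) * fps_X ^ (d * (m - k)))"
proof -
  have "qbinom m k * D = qbinom m k * (qpochhammer k * qpochhammer (m - k)) * (1 - fps_X ^ (d * (k + 1)))"
    by (simp add: D_def qpochhammer_Suc ac_simps)
  also have "\<dots> = qpochhammer m * (1 - fps_X ^ (d * (k + 1)))"
    using assms(1) by (simp only: qbinom_mult_qpochhammer less_imp_le)
  finally show "qbinom m k * D = qpochhammer m * (1 - fps_X ^ (d * (k + 1)))" .
  have "qpochhammer (m - k) = qpochhammer (m - Suc k) * (1 - fps_X ^ (d * (m - k)) :: 'a fps)"
    using assms(1) by (simp add: qpochhammer_Suc Suc_diff_Suc flip: Suc_diff_Suc)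
  then have "qbinom m (Suc k) * D = qbinom m (Suc k) * (qpochhammer (Suc k) * qpochhammer (m - Suc k)) *
      (1 - fps_X ^ (d * (m - k)))"
    by (simp add: D_def mult.assoc)
  also have "\<dots> = qpochhammer m * (1 - fps_X ^ (d * (m - k)))"
    using assms(1) by (simp only: qbinom_mult_qpochhammer Suc_leI)
  finally show "qbinom m (Suc k) * D = qpochhammer m * (1 - fps_X ^ (d * (m - k)))" .
  have "fps_X ^ (d * (k + 1)) * fps_X ^ (d * (m - k)) = (fps_X ^ (d * (m + 1)) :: 'a fps)"
    using assms(1) by (simp flip: power_add add_mult_distrib2)
  then show "qbinom (Suc m) (Suc k) * D = qpochhammer m * (1 - fps_X ^ (d * (k + 1)) * fps_X ^ (d * (m - k)))"
    using qbinom_mult_qpochhammer[of "Suc k" "Suc m"] assms(1) by (simp add: D_def qpochhammer_Suc)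
qed

lemma qbinom_Suc_Suc:
  "qbinom (Suc m) (Suc k) = qbinom m k + fps_X ^ (d * (k + 1)) * (qbinom m (Suc k) :: 'a::field fps)"
proof (cases "k < m")
  case True
  let ?D = "qpochhammer (Suc k) * qpochhammer (m - k) :: 'a fps"
  have "?D \<noteq> 0"
    by simp
  moreover have "qbinom (Suc m) (Suc k) * ?D = (qbinom m k + fps_X ^ (d * (k + 1)) * qbinom m (Suc k)) * ?D"
    by (simp only: distrib_right mult.assoc qbinom_mult_common_denominator[OF True]) (simp add: algebra_simps)
  ultimately show ?thesis
    by simp
qed (cases "k = m"; simp add: qbinom_eq_0)

lemma qbinom_Suc_Suc':
  "qbinom (Suc m) (Suc k) = fps_X ^ (d * (m - k)) * qbinom m k + (qbinom m (Suc k) :: 'a::field fps)"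
proof (cases "k < m")
  case True
  let ?D = "qpochhammer (Suc k) * qpochhammer (m - k) :: 'a fps"
  have "?D \<noteq> 0"
    by simp
  moreover have "qbinom (Suc m) (Suc k) * ?D = (fps_X ^ (d * (m - k)) * qbinom m k + qbinom m (Suc k)) * ?D"
    by (simp only: distrib_right mult.assoc qbinom_mult_common_denominator[OF True]) (simp add: algebra_simps)
  ultimately show ?thesis
    by simp
qed (cases "k = m"; simp add: qbinom_eq_0)

lemma qbinom_Suc_Suc_Suc:
  "qbinom (Suc (Suc m)) (Suc j) = qbinom (Suc m) j + (fps_X ^ (d * (m + 1)) * qbinom m j
     + fps_X ^ (d * (j + 1)) * (qbinom m (Suc j) :: 'a::field fps))"
proof -
  have "qbinom (Suc (Suc m)) (Suc j) = qbinom (Suc m) j + fps_X ^ (d * (j + 1)) * qbinom (Suc m) (Suc j)"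
    by (rule qbinom_Suc_Suc)
  also have "qbinom (Suc m) (Suc j) = fps_X ^ (d * (m - j)) * qbinom m j + qbinom m (Suc j)"
    by (rule qbinom_Suc_Suc')
  also have "fps_X ^ (d * (j + 1)) * (fps_X ^ (d * (m - j)) * qbinom m j + qbinom m (Suc j)) =
      fps_X ^ (d * (m + 1)) * qbinom m j + fps_X ^ (d * (j + 1)) * (qbinom m (Suc j) :: 'a fps)"
  proof (cases "j \<le> m")
    case True
    then have "fps_X ^ (d * (j + 1)) * fps_X ^ (d * (m - j)) = (fps_X ^ (d * (m + 1)) :: 'a fps)"
      by (simp flip: power_add add_mult_distrib2)
    then show ?thesis
      by (simp add: algebra_simps)
  qed (simp add: qbinom_eq_0)
  finally show ?thesis .
qed

definition qbinom_int :: "nat \<Rightarrow> int \<Rightarrow> 'a::field fps" where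
  "qbinom_int m k = (if k < 0 then 0 else qbinom m (nat k))"

lemma qbinom_int_neq_0D: "qbinom_int m k \<noteq> 0 \<Longrightarrow> 0 \<le> k \<and> k \<le> int m"
  by (auto simp: qbinom_int_def qbinom_def split: if_splits)

lemma qbinom_int_add_two:
  "qbinom_int (m + 2) (k + 1) = (1 + fps_X ^ (d * (m + 1))) * qbinom_int m k
     + fps_X ^ (d * nat (int m - k + 1)) * qbinom_int m (k - 1)
     + fps_X ^ (d * nat (k + 1)) * (qbinom_int m (k + 1) :: 'a::field fps)"
proof (cases "k < 0")
  case True
  then consider "k < -1" | "k = -1"
    by linarith
  then show ?thesis
    by cases (simp_all add: qbinom_int_def)
next
  case False
  then obtain j where k: "k = int j"
    using nonneg_int_cases by (metis not_less)
  then have lhs: "qbinom_int (m + 2) (k + 1) = qbinom (Suc (Suc m)) (Suc j)"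
    by (simp add: qbinom_int_def nat_add_distrib)
  have at_k: "qbinom_int m k = qbinom m j" "qbinom_int m (k + 1) = qbinom m (Suc j)" "nat (k + 1) = j + 1"
    using k by (simp_all add: qbinom_int_def nat_add_distrib)
  show ?thesis
  proof (cases j)
    case 0
    then show ?thesis
      unfolding lhs at_k qbinom_Suc_Suc_Suc using k by (simp add: qbinom_int_def algebra_simps)
  next
    case (Suc i)
    then have at_pred: "qbinom (Suc m) j = fps_X ^ (d * (m - i)) * qbinom m i + (qbinom m j :: 'a fps)"
      "nat (int m - k + 1) = m - i" "qbinom_int m (k - 1) = qbinom m i"
      using k qbinom_Suc_Suc'[of m i] by (simp_all add: qbinom_int_def)
    show ?thesis
      unfolding lhs at_k at_pred qbinom_Suc_Suc_Suc by (simp add: algebra_simps)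
  qed
qed

lemma qpochhammer_agree_qprod:
  assumes "n < m"
  shows "fps_agree n (qpochhammer m) (qprod (- 1) (progression d d) :: 'a::field fps)"
proof -
  have "qpochhammer m = (\<Prod>i<m. qfactor (- 1) (d + i * d) :: 'a fps)"
    unfolding qpochhammer_def qfactor_minus_one by (simp add: algebra_simps)
  then show ?thesis
    using prod_qfactor_agree_qprod_progression[OF base_pos base_pos assms] by simp
qed

lemma qpochhammer_mult_qbinom_agree_one:
  assumes "k \<le> m" "n < k" "n < m - k"
  shows "fps_agree n (qpochhammer m * qbinom m k) (1 :: 'a::field fps)"
proof -
  define Z where "Z = (qprod (- 1) (progression d d) :: 'a fps)"
  define Y where "Y = qpochhammer m * (qbinom m k :: 'a fps)"
  have ZZ: "Z * Z * inverse (Z * Z) = 1"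
    by (simp add: Z_def inverse_mult_eq_1')
  have agree: "fps_agree n (qpochhammer l) Z" if "n < l" for l
    unfolding Z_def using that by (rule qpochhammer_agree_qprod)
  have "Y = Y * (Z * Z) * inverse (Z * Z)"
    using ZZ by (simp add: mult.assoc)
  also have "fps_agree n \<dots> (Y * (qpochhammer k * qpochhammer (m - k)) * inverse (Z * Z))"
    using assms by (intro fps_agree_mult fps_agree_refl fps_agree_sym[OF agree])
  also have "Y * (qpochhammer k * qpochhammer (m - k)) = qpochhammer m * qpochhammer m"
    using qbinom_mult_qpochhammer[OF assms(1)] by (simp add: Y_def mult.assoc)
  also have "fps_agree n (\<dots> * inverse (Z * Z)) (Z * Z * inverse (Z * Z))"
    using assms by (intro fps_agree_mult fps_agree_refl agree) simp_all
  finally show ?thesis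
    unfolding ZZ Y_def .
qed

end

section \<open>A finite form of the Jacobi triple product\<close>

lemma sum_int_interval_shift:
  fixes lo hi c :: int
  shows "(\<Sum>j\<in>{lo..hi}. f j) = (\<Sum>i\<in>{lo - c..hi - c}. f (i + c))"
  by (rule sum.reindex_bij_witness[of _ "\<lambda>i. i + c" "\<lambda>j. j - c"]) auto

lemma int_triangle_ge: "(j :: int) < 0 \<Longrightarrow> - j \<le> j * (j - 1) div 2"
proof -
  assume "j < 0"
  have "j * (j - 1) = j * (j + 1) + 2 * (- j)"
    by (simp add: algebra_simps)
  moreover have "0 \<le> j * (j + 1)"
    using \<open>j < 0\<close> by (simp add: zero_le_mult_iff)
  ultimately show ?thesis
    by simp
qed

lemma int_triangle_nonneg: "0 \<le> (j :: int) * (j - 1) div 2"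
  by (cases "0 \<le> j") (auto simp: zero_le_mult_iff dest: int_triangle_ge)

lemma int_triangle_succ: "(j + 1) * (j + 1 - 1) div 2 = j * (j - 1) div 2 + (j :: int)"
proof -
  have "(j + 1) * (j + 1 - 1) = j * (j - 1) + 2 * j"
    by (simp add: algebra_simps)
  then show ?thesis
    by simp
qed

context
  fixes d a b :: nat
  assumes exponents_pos: "0 < a" "0 < b"
    and exponents_sum: "a + b = d"
begin

definition jtp_exponent :: "int \<Rightarrow> nat" where
  "jtp_exponent j = nat (int d * (j * (j - 1) div 2) + int a * j)"

lemma jtp_exponent_eq: "int (jtp_exponent j) = int d * (j * (j - 1) div 2) + int a * j"
proof -
  have "0 \<le> int d * (j * (j - 1) div 2) + int a * j"
  proof (cases "0 \<le> j")
    case True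
    then show ?thesis
      using int_triangle_nonneg[of j] by simp
  next
    case False
    then have "int d * - j \<le> int d * (j * (j - 1) div 2)"
      by (intro mult_left_mono int_triangle_ge) simp_all
    moreover have "int a * - j \<le> int d * - j"
      using False exponents_sum by (intro mult_right_mono) simp_all
    ultimately show ?thesis
      by simp
  qed
  then show ?thesis
    by (simp add: jtp_exponent_def)
qed

lemma jtp_exponent_succ: "int (jtp_exponent (j + 1)) = int (jtp_exponent j) + int d * j + int a"
  unfolding jtp_exponent_eq int_triangle_succ by (simp add: algebra_simps)

lemma abs_le_jtp_exponent: "\<bar>j\<bar> \<le> int (jtp_exponent j)"
proof (cases "0 \<le> j")
  case True
  have "j \<le> int a * j"
    using True exponents_pos(1) mult_right_mono[of 1 "int a" j] by simp
  moreover have "0 \<le> int d * (j * (j - 1) div 2)"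
    by (intro mult_nonneg_nonneg int_triangle_nonneg) simp
  ultimately show ?thesis
    using True unfolding jtp_exponent_eq by linarith
next
  case False
  then have "int d * - j \<le> int d * (j * (j - 1) div 2)"
    by (intro mult_left_mono int_triangle_ge) simp_all
  moreover have "1 * - j \<le> int b * - j"
    using False exponents_pos(2) by (intro mult_right_mono) simp_all
  moreover have "int d * - j = int a * - j + int b * - j"
    by (simp flip: exponents_sum add: algebra_simps)
  ultimately show ?thesis
    using False unfolding jtp_exponent_eq by (simp only: mult_minus_right)
qed

lemma jtp_exponent_shift_down:
  assumes "i \<le> int N"
  shows "d * nat (int N - i) + jtp_exponent (i + 1) = jtp_exponent i + (d * N + a)"
proof -
  have "int (d * nat (int N - i) + jtp_exponent (i + 1)) = int (jtp_exponent i + (d * N + a))"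
    using assms jtp_exponent_succ[of i] by (simp add: algebra_simps)
  then show ?thesis
    by (simp only: of_nat_eq_iff)
qed

lemma jtp_exponent_shift_up:
  assumes "- int N \<le> i"
  shows "d * nat (int N + i) + jtp_exponent (i - 1) = jtp_exponent i + (d * N + b)"
proof -
  have "int (d * nat (int N + i) + jtp_exponent (i - 1)) = int (jtp_exponent i + (d * N + b))"
    using assms jtp_exponent_succ[of "i - 1"] by (simp add: algebra_simps flip: exponents_sum)
  then show ?thesis
    by (simp only: of_nat_eq_iff)
qed

lemma period_pos: "0 < d"
  using exponents_pos exponents_sum by simp

definition jtp_partial :: "nat \<Rightarrow> 'a::comm_ring_1 fps" where
  "jtp_partial N = (\<Prod>k<N. (1 + fps_X ^ (d * k + a)) * (1 + fps_X ^ (d * k + b)))"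

text \<open>Only the terms with $|j| \le N$ are nonzero; the free summation range absorbs the index shifts in the
  induction on \<open>N\<close>.\<close>
definition jtp_sum :: "nat \<Rightarrow> int \<Rightarrow> int \<Rightarrow> 'a::field fps" where
  "jtp_sum N lo hi = (\<Sum>j\<in>{lo..hi}. qbinom_int d (2 * N) (int N + j) * fps_X ^ jtp_exponent j)"

lemma qbinom_int_centered_neq_0D:
  "qbinom_int d (2 * N) (int N + i) \<noteq> 0 \<Longrightarrow> - int N \<le> i \<and> i \<le> int N"
  using qbinom_int_neq_0D[OF period_pos] by force

lemma jtp_sum_shift_down:
  "(\<Sum>j\<in>{lo..hi}. fps_X ^ (d * nat (int N - j + 1)) * qbinom_int d (2 * N) (int N + (j - 1))
      * fps_X ^ jtp_exponent j)
   = jtp_sum N (lo - 1) (hi - 1) * (fps_X ^ (d * N + a) :: 'a::field fps)"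
proof -
  let ?g = "\<lambda>i. qbinom_int d (2 * N) (int N + i) :: 'a fps"
  have "(\<Sum>j\<in>{lo..hi}. fps_X ^ (d * nat (int N - j + 1)) * ?g (j - 1) * fps_X ^ jtp_exponent j) =
      (\<Sum>i\<in>{lo - 1..hi - 1}. fps_X ^ (d * nat (int N - i)) * ?g i * fps_X ^ jtp_exponent (i + 1))"
    by (subst sum_int_interval_shift[where c = 1]) simp
  also have "\<dots> = (\<Sum>i\<in>{lo - 1..hi - 1}. ?g i * fps_X ^ jtp_exponent i * fps_X ^ (d * N + a))"
  proof (rule sum.cong[OF refl])
    fix i
    show "fps_X ^ (d * nat (int N - i)) * ?g i * fps_X ^ jtp_exponent (i + 1) =
        ?g i * fps_X ^ jtp_exponent i * fps_X ^ (d * N + a)"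
    proof (cases "?g i = 0")
      case False
      then have "d * nat (int N - i) + jtp_exponent (i + 1) = jtp_exponent i + (d * N + a)"
        using qbinom_int_centered_neq_0D jtp_exponent_shift_down by blast
      then have "fps_X ^ (d * nat (int N - i)) * fps_X ^ jtp_exponent (i + 1) =
          (fps_X ^ jtp_exponent i * fps_X ^ (d * N + a) :: 'a fps)"
        by (simp flip: power_add)
      then show ?thesis
        by (simp add: algebra_simps)
    qed simp
  qed
  also have "\<dots> = jtp_sum N (lo - 1) (hi - 1) * fps_X ^ (d * N + a)"
    by (simp add: jtp_sum_def sum_distrib_right)
  finally show ?thesis .
qed

lemma jtp_sum_shift_up:
  "(\<Sum>j\<in>{lo..hi}. fps_X ^ (d * nat (int N + j + 1)) * qbinom_int d (2 * N) (int N + (j + 1))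
      * fps_X ^ jtp_exponent j)
   = jtp_sum N (lo + 1) (hi + 1) * (fps_X ^ (d * N + b) :: 'a::field fps)"
proof -
  let ?g = "\<lambda>i. qbinom_int d (2 * N) (int N + i) :: 'a fps"
  have "(\<Sum>j\<in>{lo..hi}. fps_X ^ (d * nat (int N + j + 1)) * ?g (j + 1) * fps_X ^ jtp_exponent j) =
      (\<Sum>i\<in>{lo + 1..hi + 1}. fps_X ^ (d * nat (int N + i)) * ?g i * fps_X ^ jtp_exponent (i - 1))"
    by (subst sum_int_interval_shift[where c = "- 1"]) simp
  also have "\<dots> = (\<Sum>i\<in>{lo + 1..hi + 1}. ?g i * fps_X ^ jtp_exponent i * fps_X ^ (d * N + b))"
  proof (rule sum.cong[OF refl])
    fix i
    show "fps_X ^ (d * nat (int N + i)) * ?g i * fps_X ^ jtp_exponent (i - 1) =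
        ?g i * fps_X ^ jtp_exponent i * fps_X ^ (d * N + b)"
    proof (cases "?g i = 0")
      case False
      then have "d * nat (int N + i) + jtp_exponent (i - 1) = jtp_exponent i + (d * N + b)"
        using qbinom_int_centered_neq_0D jtp_exponent_shift_up by blast
      then have "fps_X ^ (d * nat (int N + i)) * fps_X ^ jtp_exponent (i - 1) =
          (fps_X ^ jtp_exponent i * fps_X ^ (d * N + b) :: 'a fps)"
        by (simp flip: power_add)
      then show ?thesis
        by (simp add: algebra_simps)
    qed simp
  qed
  also have "\<dots> = jtp_sum N (lo + 1) (hi + 1) * fps_X ^ (d * N + b)"
    by (simp add: jtp_sum_def sum_distrib_right)
  finally show ?thesis .
qed

lemma jtp_sum_Suc:
  "jtp_sum (Suc N) lo hi = (1 + fps_X ^ (d * (2 * N + 1))) * jtp_sum N lo hi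
     + jtp_sum N (lo - 1) (hi - 1) * fps_X ^ (d * N + a)
     + jtp_sum N (lo + 1) (hi + 1) * (fps_X ^ (d * N + b) :: 'a::field fps)"
proof -
  let ?g = "\<lambda>i. qbinom_int d (2 * N) (int N + i) :: 'a fps"
  have step: "qbinom_int d (2 * Suc N) (int (Suc N) + j) = (1 + fps_X ^ (d * (2 * N + 1))) * ?g j
      + fps_X ^ (d * nat (int N - j + 1)) * ?g (j - 1) + fps_X ^ (d * nat (int N + j + 1)) * ?g (j + 1)" for j
  proof -
    have "2 * Suc N = 2 * N + 2" "int (Suc N) + j = (int N + j) + 1"
      "int (2 * N) - (int N + j) + 1 = int N - j + 1" "int N + j - 1 = int N + (j - 1)"
      "int N + j + 1 = int N + (j + 1)"
      by simp_all
    then show ?thesis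
      using qbinom_int_add_two[OF period_pos, of "2 * N" "int N + j"] by (simp only: add.commute)
  qed
  have "jtp_sum (Suc N) lo hi =
      (\<Sum>j\<in>{lo..hi}. (1 + fps_X ^ (d * (2 * N + 1))) * ?g j * fps_X ^ jtp_exponent j) +
      (\<Sum>j\<in>{lo..hi}. fps_X ^ (d * nat (int N - j + 1)) * ?g (j - 1) * fps_X ^ jtp_exponent j) +
      (\<Sum>j\<in>{lo..hi}. fps_X ^ (d * nat (int N + j + 1)) * ?g (j + 1) * fps_X ^ jtp_exponent j)"
    by (simp only: jtp_sum_def step distrib_right sum.distrib)
  then show ?thesis
    by (simp only: jtp_sum_shift_down jtp_sum_shift_up) (simp add: jtp_sum_def sum_distrib_left mult.assoc)
qed

theorem jtp_partial_eq_jtp_sum: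
  "lo \<le> - int N \<Longrightarrow> int N \<le> hi \<Longrightarrow> jtp_partial N = (jtp_sum N lo hi :: 'a::field fps)"
proof (induction N arbitrary: lo hi)
  case 0
  have "jtp_sum 0 lo hi = (\<Sum>j\<in>{lo..hi}. if j = 0 then 1 else 0 :: 'a fps)"
    unfolding jtp_sum_def
    by (rule sum.cong) (auto simp: period_pos qbinom_int_def qbinom_eq_0 jtp_exponent_def)
  with 0 show ?case
    by (simp add: jtp_partial_def)
next
  case (Suc N)
  have "fps_X ^ (d * N + a) * fps_X ^ (d * N + b) = (fps_X ^ (d * (2 * N + 1)) :: 'a fps)"
    by (simp flip: power_add exponents_sum add: algebra_simps)
  then have "jtp_partial (Suc N) = (1 + fps_X ^ (d * (2 * N + 1))) * jtp_partial N
      + jtp_partial N * fps_X ^ (d * N + a) + jtp_partial N * (fps_X ^ (d * N + b) :: 'a fps)"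
    by (simp add: jtp_partial_def algebra_simps)
  also have "\<dots> = jtp_sum (Suc N) lo hi"
  proof -
    have IH: "jtp_partial N = (jtp_sum N lo hi :: 'a fps)" "jtp_partial N = (jtp_sum N (lo - 1) (hi - 1) :: 'a fps)"
      "jtp_partial N = (jtp_sum N (lo + 1) (hi + 1) :: 'a fps)"
      using Suc.prems by (auto intro!: Suc.IH)
    show ?thesis
      by (simp only: jtp_sum_Suc flip: IH)
  qed
  finally show ?case .
qed

lemma jtp_partial_agree_qprod:
  assumes "n < N"
  shows "fps_agree n (jtp_partial N) (qprod 1 (progression a d) * qprod 1 (progression b d) :: 'a::comm_ring_1 fps)"
proof -
  have "jtp_partial N = (\<Prod>k<N. qfactor 1 (a + k * d)) * (\<Prod>k<N. qfactor 1 (b + k * d) :: 'a fps)"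
    unfolding jtp_partial_def prod.distrib [symmetric] by (simp add: qfactor_def algebra_simps)
  then show ?thesis
    using assms exponents_pos period_pos by (simp add: fps_agree_mult prod_qfactor_agree_qprod_progression)
qed

lemma jtp_term_nonneg:
  assumes "2 * n < N"
  shows "0 \<le> (qpochhammer d (2 * N) * (qbinom_int d (2 * N) (int N + j) * fps_X ^ jtp_exponent j)
      :: 'a::linordered_field fps) $ n"
    (is "0 \<le> (?P * (?g * ?X)) $ n")
proof (cases "?g = 0")
  case False
  then obtain k where k: "int N + j = int k" "k \<le> 2 * N" "?g = qbinom d (2 * N) k"
    using qbinom_int_neq_0D[OF period_pos False] period_pos
    by (metis nat_int nat_eq_iff2 of_nat_le_iff qbinom_int_def not_less)
  have coeff: "(?P * (?g * ?X)) $ n = (if n < jtp_exponent j then 0 else (?P * ?g) $ (n - jtp_exponent j))"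
    unfolding mult.assoc [symmetric] by (rule fps_X_power_mult_right_nth)
  show ?thesis
  proof (cases "n < jtp_exponent j")
    case False
    then have "\<bar>j\<bar> \<le> int n"
      using abs_le_jtp_exponent[of j] by linarith
    then have "n < k" "n < 2 * N - k"
      using k(1) assms by linarith+
    then have "fps_agree n (?P * ?g) 1"
      unfolding k(3) using k(2) by (intro qpochhammer_mult_qbinom_agree_one period_pos)
    then show ?thesis
      unfolding coeff by (simp add: fps_agree_def)
  qed (simp add: coeff)
qed simp

theorem jtp_nonneg_coeffs:
  "nonneg_coeffs (qprod (- 1) (progression d d) * qprod 1 (progression a d) * qprod 1 (progression b d)
     :: 'a::linordered_field fps)"
  unfolding nonneg_coeffs_def
proof
  fix n :: nat
  define N where "N = 2 * n + 1"
  have "fps_agree n (qpochhammer d (2 * N) * jtp_partial N)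
      (qprod (- 1) (progression d d) * (qprod 1 (progression a d) * qprod 1 (progression b d)) :: 'a fps)"
    unfolding N_def by (intro fps_agree_mult qpochhammer_agree_qprod jtp_partial_agree_qprod period_pos) simp_all
  then have "(qprod (- 1) (progression d d) * qprod 1 (progression a d) * qprod 1 (progression b d)) $ n =
      (qpochhammer d (2 * N) * jtp_partial N :: 'a fps) $ n"
    by (simp add: fps_agree_def mult.assoc)
  also have "\<dots> = (\<Sum>j\<in>{- int N..int N}.
      (qpochhammer d (2 * N) * (qbinom_int d (2 * N) (int N + j) * fps_X ^ jtp_exponent j)) $ n)"
    by (simp add: jtp_partial_eq_jtp_sum[of "- int N" N "int N"] jtp_sum_def sum_distrib_left fps_sum_nth)
  also have "0 \<le> \<dots>"
    by (intro sum_nonneg jtp_term_nonneg) (simp add: N_def)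
  finally show "0 \<le> (qprod (- 1) (progression d d) * qprod 1 (progression a d) * qprod 1 (progression b d)
      :: 'a fps) $ n" .
qed

end

lemma nth_inverse_one_minus_X2_X3_ge:
  "of_nat (n div 6) \<le> (inverse (1 - fps_X ^ 2) * inverse (1 - fps_X ^ 3) :: 'a::linordered_field fps) $ n"
proof -
  define g :: "nat \<Rightarrow> 'a" where "g i = (if 2 dvd i then 1 else 0) * (if 3 dvd n - i then 1 else 0)" for i
  define w where "w t = 2 * (2 * n mod 3) + 6 * t" for t
  have g_w: "g (w t) = 1" if "t < n div 6" for t
  proof -
    have "2 dvd w t" "3 dvd n - w t"
      unfolding w_def using that by presburger+
    then show ?thesis
      by (simp add: g_def)
  qed
  have "of_nat (n div 6) = (\<Sum>t<n div 6. g (w t))"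
    using g_w by simp
  also have "\<dots> = (\<Sum>i\<in>w ` {..<n div 6}. g i)"
    by (subst sum.reindex) (auto simp: inj_on_def w_def)
  also have "\<dots> \<le> (\<Sum>i=0..n. g i)"
    by (rule sum_mono2) (auto simp: g_def w_def)
  also have "\<dots> = (inverse (1 - fps_X ^ 2) * inverse (1 - fps_X ^ 3) :: 'a fps) $ n"
    by (simp add: inverse_one_minus_fps_X_power fps_mult_nth g_def)
  finally show ?thesis .
qed

lemma F3_factorization:
  "F3 = inverse (1 - fps_X ^ 2) * inverse (1 - fps_X ^ 3) *
     (qprod (- 1) (progression 5 5) * qprod 1 (progression 2 5) * qprod 1 (progression 3 5)) ^ 2 *
     (inverse (qprod (- 1) (progression 2 10)) * inverse (qprod (- 1) (progression 7 10)) *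
      inverse (qprod (- 1) (progression 8 10)) ^ 2 *
      inverse (qprod (- 1) (progression 12 10)) * inverse (qprod (- 1) (progression 13 10)))"
proof -
  define E :: "nat \<Rightarrow> rat fps" where "E a = qprod (- 1) (progression a 10)" for a
  define Q :: "rat fps" where
    "Q = qprod (- 1) (progression 5 5) * qprod 1 (progression 2 5) * qprod 1 (progression 3 5)"
  define Y where "Y = E 10 ^ 7 * E 2 ^ 2 * E 3 ^ 2 * E 7 ^ 2 * E 8 ^ 2"
  define D where "D = E 2 * E 7 * E 8 ^ 2 * E 12 * E 13"
  have J2: "J2 a 10 = E a * E (10 - a) * E 10" if "0 < a" "a < 10" for a
    using that by (simp add: J2_def E_def qpoch_inf_eq_qprod)
  have E46: "E 4 = E 2 * E 7 * qprod 1 (progression 2 5)" "E 6 = E 3 * E 8 * qprod 1 (progression 3 5)"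
    using qprod_progression_double[of 5 2] qprod_progression_double[of 5 3] by (simp_all add: E_def)
  have num: "J 5 ^ 2 * J 10 ^ 5 * J2 4 10 ^ 2 = Q ^ 2 * Y"
    by (simp add: J_def J2 qpoch_inf_eq_qprod Q_def Y_def E_def [symmetric] E46) algebra
  have E23: "E 2 = (1 - fps_X ^ 2) * E 12" "E 3 = (1 - fps_X ^ 3) * E 13"
    using qprod_progression_first[of 2 10 "- 1"] qprod_progression_first[of 3 10 "- 1"]
    by (simp_all add: E_def qfactor_minus_one)
  have den: "J2 2 10 ^ 4 * J2 3 10 ^ 3 = (1 - fps_X ^ 2) * (1 - fps_X ^ 3) * D * Y"
    by (simp add: J2 D_def Y_def) (simp only: E23; algebra)
  have [simp]: "E a $ 0 = 1" for a
    by (simp add: E_def)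
  have "F3 = Q ^ 2 * Y * inverse ((1 - fps_X ^ 2) * (1 - fps_X ^ 3) * D * Y)"
    unfolding F3_def num den by (rule fps_divide_unit) (simp add: D_def Y_def fps_nth_power_0)
  also have "\<dots> = inverse (1 - fps_X ^ 2) * inverse (1 - fps_X ^ 3) * Q ^ 2 * inverse D * (Y * inverse Y)"
    by (simp add: fps_inverse_mult)
  also have "Y * inverse Y = 1"
    by (simp add: Y_def inverse_mult_eq_1' fps_nth_power_0)
  finally show ?thesis
    by (simp add: Q_def D_def E_def fps_inverse_mult fps_inverse_power mult.assoc)
qed

theorem mainTheorem3:
  fixes n :: nat
  assumes "n \<ge> 1"
  shows "rat_of_int \<lfloor>real n / 6\<rfloor> \<le> fps_nth F3 n"
proof -
  define H :: "rat fps" where "H = inverse (1 - fps_X ^ 2) * inverse (1 - fps_X ^ 3)"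
  define Q :: "rat fps" where
    "Q = qprod (- 1) (progression 5 5) * qprod 1 (progression 2 5) * qprod 1 (progression 3 5)"
  define W :: "rat fps" where
    "W = inverse (qprod (- 1) (progression 2 10)) * inverse (qprod (- 1) (progression 7 10)) *
      inverse (qprod (- 1) (progression 8 10)) ^ 2 *
      inverse (qprod (- 1) (progression 12 10)) * inverse (qprod (- 1) (progression 13 10))"
  have "nonneg_coeffs Q"
    unfolding Q_def using jtp_nonneg_coeffs[of 2 3 5] by simp
  then have "nonneg_coeffs (Q ^ 2 * W)"
    unfolding W_def by (intro nonneg_coeffs_mult nonneg_coeffs_power nonneg_coeffs_inverse_qprod)
  moreover have "nonneg_coeffs H"
    unfolding H_def by (intro nonneg_coeffs_mult nonneg_coeffs_inverse_one_minus_fps_X_power) simp_all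
  moreover have "F3 = H * (Q ^ 2 * W)"
    unfolding F3_factorization H_def Q_def W_def by (simp only: mult.assoc)
  ultimately have "H $ n * (Q ^ 2 * W) $ 0 \<le> F3 $ n"
    by (metis fps_mult_nth_ge)
  then have "H $ n \<le> F3 $ n"
    by (simp add: Q_def W_def fps_nth_power_0)
  moreover have "of_nat (n div 6) \<le> H $ n"
    unfolding H_def by (rule nth_inverse_one_minus_X2_X3_ge)
  moreover have "\<lfloor>real n / 6\<rfloor> = int (n div 6)"
    using floor_divide_of_nat_eq[of n 6] by simp
  ultimately show ?thesis
    by simp
qed

end
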